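(* Let $(\mathfrak g,\mathfrak g';\rho,\rho')$ be a matched pair of Hom-Lie algebras. Then the Hom-Lie algebra $(\mathfrak g\oplus\mathfrak g',[\cdot,\cdot]_d,\phi_d)$ is weakly involutive if and only if: (i) $\mathfrak g$ is weakly involutive and $(\mathfrak g',\phi_{\mathfrak g'},\rho)$ is a weakly involutive representation of $\mathfrak g$; (ii) $\mathfrak g'$ is weakly involutive and $(\mathfrak g,\phi_{\mathfrak g},\rho')$ is a weakly involutive representation of $\mathfrak g'$; (iii) $\rho(x)\phi_{\mathfrak g'}^2=\rho(x)$ for all $x\in\mathfrak g$; (iv) $\rho'(x')\phi_{\mathfrak g}^2=\rho'(x')$ for all $x'\in\mathfrak g'$.
   Context: A Hom-Lie algebra $(\mathfrak{h},[\cdot,\cdot]_{\mathfrak{h}},\phi_{\mathfrak{h}})$: skew-symmetric bilinear bracket and linear map with $\phi_{\mathfrak h}[x,y]=[\phi_{\mathfrak h}x,\phi_{\mathfrak h}y]$ and $[\phi_{\mathfrak h}(x),[y,z]]+[\phi_{\mathfrak h}(y),[z,x]]+[\phi_{\mathfrak h}(z),[x,y]]=0$; weakly involutive if $[\phi_{\mathfrak h}^2(x),y]=[x,y]$. A representation $(V,\beta,\rho)$ of $\mathfrak h$: $\beta\in\mathfrak{gl}(V)$, $\rho:\mathfrak h\to\mathfrak{gl}(V)$ with $\rho(\phi_{\mathfrak h}(x))\beta=\beta\rho(x)$ and $\rho([x,y])\beta=\rho(\phi_{\mathfrak h}(x))\rho(y)-\rho(\phi_{\mathfrak h}(y))\rho(x)$;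 weakly involutive if $\rho(\phi_{\mathfrak h}^2(x))=\rho(x)$. A matched pair $(\mathfrak g,\mathfrak g';\rho,\rho')$: Hom-Lie algebras $(\mathfrak g,[\cdot,\cdot]_{\mathfrak g},\phi_{\mathfrak g})$, $(\mathfrak g',[\cdot,\cdot]_{\mathfrak g'},\phi_{\mathfrak g'})$, representations $(\mathfrak g',\phi_{\mathfrak g'},\rho)$ of $\mathfrak g$ and $(\mathfrak g,\phi_{\mathfrak g},\rho')$ of $\mathfrak g'$ with, for $x,y\in\mathfrak g$, $x',y'\in\mathfrak g'$: $\rho'(\phi_{\mathfrak g'}(x'))[x,y]_{\mathfrak g}=[\rho'(x')x,\phi_{\mathfrak g}(y)]_{\mathfrak g}+[\phi_{\mathfrak g}(x),\rho'(x')y]_{\mathfrak g}+\rho'(\rho(y)x')\phi_{\mathfrak g}(x)-\rho'(\rho(x)x')\phi_{\mathfrak g}(y)$ and $\rho(\phi_{\mathfrak g}(x))[x',y']_{\mathfrak g'}=[\rho(x)x',\phi_{\mathfrak g'}(y')]_{\mathfrak g'}+[\phi_{\mathfrak g'}(x'),\rho(x)y']_{\mathfrak g'}+\rho(\rho'(y')x)\phi_{\mathfrak g'}(x')-\rho(\rho'(x')x)\phi_{\mathfrak g'}(y')$. For such a matched pair, $(\mathfrak g\oplus\mathfrak g',[\cdot,\cdot]_d,\phi_d)$ is the Hom-Lie algebra with $\phi_d(x,x')=(\phi_{\mathfrak g}(x),\phi_{\mathfrak g'}(x'))$ and $[(x,x'),(y,y')]_d=([x,y]_{\mathfrak g}-\rho'(y')x+\rho'(x')y,\,[x',y']_{\mathfrak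 g'}+\rho(x)y'-\rho(y)x')$. *)

theory Defs
  imports Complex_Main
begin

text \<open>Vector spaces over a common field 'k are given via scalar multiplications
  satisfying the locale vector_space (from HOL.Vector_Spaces).\<close>

definition linear_map ::
  "('k::field \<Rightarrow> 'a::ab_group_add \<Rightarrow> 'a) \<Rightarrow> ('k \<Rightarrow> 'b::ab_group_add \<Rightarrow> 'b) \<Rightarrow> ('a \<Rightarrow> 'b) \<Rightarrow> bool" where
  "linear_map sa sb f \<longleftrightarrow> (\<forall>x y. f (x + y) = f x + f y) \<and> (\<forall>c x. f (sa c x) = sb c (f x))"

definition bilinear_map ::
  "('k::field \<Rightarrow> 'a::ab_group_add \<Rightarrow> 'a) \<Rightarrow> ('k \<Rightarrow> 'b::ab_group_add \<Rightarrow> 'b) \<Rightarrow> ('k \<Rightarrow> 'c::ab_group_add \<Rightarrow> 'c)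
    \<Rightarrow> ('a \<Rightarrow> 'b \<Rightarrow> 'c) \<Rightarrow> bool" where
  "bilinear_map sa sb sc f \<longleftrightarrow>
     (\<forall>y. linear_map sa sc (\<lambda>x. f x y)) \<and>
     (\<forall>x. linear_map sb sc (\<lambda>y. f x y))"

definition hom_lie_algebra ::
  "('k::field \<Rightarrow> 'h::ab_group_add \<Rightarrow> 'h) \<Rightarrow> ('h \<Rightarrow> 'h \<Rightarrow> 'h) \<Rightarrow> ('h \<Rightarrow> 'h) \<Rightarrow> bool" where
  "hom_lie_algebra sc br phi \<longleftrightarrow>
     vector_space sc \<and>
     bilinear_map sc sc sc br \<and>
     (\<forall>x y. br x y = - br y x) \<and>
     linear_map sc sc phi \<and>
     (\<forall>x y. phi (br x y) = br (phi x) (phi y)) \<and>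
     (\<forall>x y z. br (phi x) (br y z) + br (phi y) (br z x) + br (phi z) (br x y) = 0)"

definition weakly_involutive_hla :: "('h \<Rightarrow> 'h \<Rightarrow> 'h) \<Rightarrow> ('h \<Rightarrow> 'h) \<Rightarrow> bool" where
  "weakly_involutive_hla br phi \<longleftrightarrow> (\<forall>x y. br (phi (phi x)) y = br x y)"

definition hom_lie_rep ::
  "('k::field \<Rightarrow> 'h::ab_group_add \<Rightarrow> 'h) \<Rightarrow> ('h \<Rightarrow> 'h \<Rightarrow> 'h) \<Rightarrow> ('h \<Rightarrow> 'h)
    \<Rightarrow> ('k \<Rightarrow> 'v::ab_group_add \<Rightarrow> 'v) \<Rightarrow> ('v \<Rightarrow> 'v) \<Rightarrow> ('h \<Rightarrow> 'v \<Rightarrow> 'v) \<Rightarrow> bool" where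
  "hom_lie_rep sh br phi sv beta rho \<longleftrightarrow>
     vector_space sv \<and>
     linear_map sv sv beta \<and>
     bilinear_map sh sv sv rho \<and>
     (\<forall>x. rho (phi x) \<circ> beta = beta \<circ> rho x) \<and>
     (\<forall>x y. rho (br x y) \<circ> beta = rho (phi x) \<circ> rho y - rho (phi y) \<circ> rho x)"

definition weakly_involutive_rep :: "('h \<Rightarrow> 'h) \<Rightarrow> ('h \<Rightarrow> 'v \<Rightarrow> 'v) \<Rightarrow> bool" where
  "weakly_involutive_rep phi rho \<longleftrightarrow> (\<forall>x. rho (phi (phi x)) = rho x)"

definition matched_pair ::
  "('k::field \<Rightarrow> 'g::ab_group_add \<Rightarrow> 'g) \<Rightarrow> ('g \<Rightarrow> 'g \<Rightarrow> 'g) \<Rightarrow> ('g \<Rightarrow> 'g)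
   \<Rightarrow> ('k \<Rightarrow> 'h::ab_group_add \<Rightarrow> 'h) \<Rightarrow> ('h \<Rightarrow> 'h \<Rightarrow> 'h) \<Rightarrow> ('h \<Rightarrow> 'h)
   \<Rightarrow> ('g \<Rightarrow> 'h \<Rightarrow> 'h) \<Rightarrow> ('h \<Rightarrow> 'g \<Rightarrow> 'g) \<Rightarrow> bool" where
  "matched_pair sg brg phig sh brh phih rho rho' \<longleftrightarrow>
     hom_lie_algebra sg brg phig \<and>
     hom_lie_algebra sh brh phih \<and>
     hom_lie_rep sg brg phig sh phih rho \<and>
     hom_lie_rep sh brh phih sg phig rho' \<and>
     (\<forall>x y x'. rho' (phih x') (brg x y) =
        brg (rho' x' x) (phig y) + brg (phig x) (rho' x' y)
        + rho' (rho y x') (phig x) - rho' (rho x x') (phig y)) \<and>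
     (\<forall>x x' y'. rho (phig x) (brh x' y') =
        brh (rho x x') (phih y') + brh (phih x') (rho x y')
        + rho (rho' y' x) (phih x') - rho (rho' x' x) (phih y'))"

definition bracket_d ::
  "('g::ab_group_add \<Rightarrow> 'g \<Rightarrow> 'g) \<Rightarrow> ('h::ab_group_add \<Rightarrow> 'h \<Rightarrow> 'h)
   \<Rightarrow> ('g \<Rightarrow> 'h \<Rightarrow> 'h) \<Rightarrow> ('h \<Rightarrow> 'g \<Rightarrow> 'g) \<Rightarrow> 'g \<times> 'h \<Rightarrow> 'g \<times> 'h \<Rightarrow> 'g \<times> 'h" where
  "bracket_d brg brh rho rho' p q =
     (brg (fst p) (fst q) - rho' (snd q) (fst p) + rho' (snd p) (fst q),
      brh (snd p) (snd q) + rho (fst p) (snd q) - rho (fst q) (snd p))"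

definition phi_d :: "('g \<Rightarrow> 'g) \<Rightarrow> ('h \<Rightarrow> 'h) \<Rightarrow> 'g \<times> 'h \<Rightarrow> 'g \<times> 'h" where
  "phi_d phig phih p = (phig (fst p), phih (snd p))"

end

theory Submission
  imports Defs
begin

text \<open>Weak involutivity of the bracket on \<open>g \<oplus> g'\<close> splits into six component identities:
  the two components of \<open>[\<phi>\<^sub>d\<^sup>2(x,x'), (y,y')]\<^sub>d = [(x,x'), (y,y')]\<^sub>d\<close> are sums of terms each
  depending on only two of the four variables, so setting the other two to zero isolates each
  term, and bilinearity makes the zero instances vanish.\<close>

lemma linear_map_zero: "linear_map sa sb f \<Longrightarrow> f 0 = 0"
  unfolding linear_map_def by (metis add_cancel_right_right add_0)

lemma bilinear_map_zero:
  assumes "bilinear_map sa sb sc f"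
  shows "f 0 y = 0" "f x 0 = 0"
  using assms linear_map_zero unfolding bilinear_map_def by fastforce+

lemma hom_lie_algebra_zero:
  assumes "hom_lie_algebra sc br phi"
  shows "phi 0 = 0" "br 0 y = 0" "br x 0 = 0"
  using assms linear_map_zero bilinear_map_zero unfolding hom_lie_algebra_def by metis+

lemma weakly_involutive_bracket_d_iff:
  assumes "hom_lie_algebra sg brg phig" "hom_lie_algebra sh brh phih"
    and "bilinear_map sg sh sh rho" "bilinear_map sh sg sg rho'"
  shows "weakly_involutive_hla (bracket_d brg brh rho rho') (phi_d phig phih) \<longleftrightarrow>
    (\<forall>x y. brg (phig (phig x)) y = brg x y) \<and>
    (\<forall>x y'. rho (phig (phig x)) y' = rho x y') \<and>
    (\<forall>x' y'. brh (phih (phih x')) y' = brh x' y') \<and>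
    (\<forall>x' y. rho' (phih (phih x')) y = rho' x' y) \<and>
    (\<forall>x x'. rho x (phih (phih x')) = rho x x') \<and>
    (\<forall>x' x. rho' x' (phig (phig x)) = rho' x' x)"
    (is "_ \<longleftrightarrow> ?components")
proof
  have zero: "phig 0 = 0" "phih 0 = 0" "\<And>y. brg 0 y = 0" "\<And>y. brh 0 y = 0"
    "\<And>y. brg y 0 = 0" "\<And>y. brh y 0 = 0" "\<And>y. rho 0 y = 0" "\<And>y. rho y 0 = 0"
    "\<And>y. rho' 0 y = 0" "\<And>y. rho' y 0 = 0"
    using assms hom_lie_algebra_zero bilinear_map_zero by metis+
  assume "weakly_involutive_hla (bracket_d brg brh rho rho') (phi_d phig phih)"
  then have "bracket_d brg brh rho rho' (phi_d phig phih (phi_d phig phih (x, x'))) (y, y')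
      = bracket_d brg brh rho rho' (x, x') (y, y')" for x x' y y'
    unfolding weakly_involutive_hla_def by blast
  then have first: "\<And>x x' y y'. brg (phig (phig x)) y - rho' y' (phig (phig x))
        + rho' (phih (phih x')) y = brg x y - rho' y' x + rho' x' y"
    and second: "\<And>x x' y y'. brh (phih (phih x')) y' + rho (phig (phig x)) y'
        - rho y (phih (phih x')) = brh x' y' + rho x y' - rho y x'"
    unfolding bracket_d_def phi_d_def by (simp_all add: prod_eq_iff)
  show ?components
    using first[where x'=0 and y'=0] first[where x=0 and y'=0] first[where x'=0 and y=0]
      second[where x'=0 and y=0] second[where x=0 and y=0] second[where x=0 and y'=0]
    by (simp add: zero)
next
  assume ?components
  then show "weakly_involutive_hla (bracket_d brg brh rho rho') (phi_d phig phih)"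
    unfolding weakly_involutive_hla_def bracket_d_def phi_d_def by simp
qed

theorem proposition3p3:
  fixes sg :: "'k::field \<Rightarrow> 'g::ab_group_add \<Rightarrow> 'g"
    and sh :: "'k \<Rightarrow> 'h::ab_group_add \<Rightarrow> 'h"
    and brg :: "'g \<Rightarrow> 'g \<Rightarrow> 'g" and phig :: "'g \<Rightarrow> 'g"
    and brh :: "'h \<Rightarrow> 'h \<Rightarrow> 'h" and phih :: "'h \<Rightarrow> 'h"
    and rho :: "'g \<Rightarrow> 'h \<Rightarrow> 'h" and rho' :: "'h \<Rightarrow> 'g \<Rightarrow> 'g"
  assumes "matched_pair sg brg phig sh brh phih rho rho'"
  shows "weakly_involutive_hla (bracket_d brg brh rho rho') (phi_d phig phih) \<longleftrightarrow>
    ((weakly_involutive_hla brg phig \<and> weakly_involutive_rep phig rho) \<and>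
     (weakly_involutive_hla brh phih \<and> weakly_involutive_rep phih rho') \<and>
     (\<forall>x. rho x \<circ> (phih \<circ> phih) = rho x) \<and>
     (\<forall>x'. rho' x' \<circ> (phig \<circ> phig) = rho' x'))"
proof -
  have "hom_lie_algebra sg brg phig" "hom_lie_algebra sh brh phih"
    "bilinear_map sg sh sh rho" "bilinear_map sh sg sg rho'"
    using assms unfolding matched_pair_def hom_lie_rep_def by auto
  note weakly_involutive_bracket_d_iff [OF this]
  then show ?thesis
    unfolding weakly_involutive_hla_def [of brg] weakly_involutive_hla_def [of brh]
      weakly_involutive_rep_def fun_eq_iff o_apply
    by blast
qed

end
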